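(* Let $d>k\geq1$, let $A\in\mathbb{R}^{d\times d}$ be symmetric positive semidefinite with $\lambda_k>\lambda_{k+1}$, let $\beta>0$ with $\lambda_k>2\sqrt\beta\geq\lambda_{k+1}$, and let $X_0\in\mathrm{St}(d,k)$ with $\cos\theta_k(U_k,X_0)>0$. Consider ANPM with momentum $\beta$ and perturbations $(\Xi_t)$ such that, for all $t\geq0$, $\|U_k^\top\Xi_t\|_2\leq c(\lambda_k-2\sqrt\beta)\cos\theta_k(U_k,X_t)$ with $c=1/32$. Then for all $t\geq0$: $U_k^\top X_t$ is invertible (so $E_t$ is well defined), $G_t$ is well defined, $U_k^\top Y_{t+1}$ and $Y_{t+1}$ have rank $k$, $\|G_t\|_2\leq\frac{1}{1/2-c\Delta}$, $$G_t=\big(I_k-\beta\Lambda_k^{-1}(U_k^\top X_{t-1})(U_k^\top X_tR_t)^{-1}+E_t\big)^{-1},$$ where $X_{-1}:=\frac{1}{2\beta}AX_0$ and $R_0:=I_k$, and $U_k^\top Y_{t+1}=\Lambda_kG_t^{-1}(U_k^\top X_t)$.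
   Context: $A$ has eigenvalues $\lambda_1\geq\dots\geq\lambda_d\geq0$, orthonormal eigenvectors $u_i$; $U_k:=[u_1,\dots,u_k]$, $\Lambda_k:=\mathrm{diag}(\lambda_1,\dots,\lambda_k)$. $\Delta:=(\lambda_k-2\sqrt\beta)/\lambda_k$. $\mathrm{St}(d,k)$, $\mathrm{QR}$, $\theta_k(U,X):=\arccos\sigma_{\min}(U^\top X)$ as usual (QR: $Y=XR$, $X^\top X=I_k$, $R$ upper triangular with nonnegative diagonal). ANPM: $Y_1:=\tfrac12AX_0+\Xi_0$, $(X_1,R_1)=\mathrm{QR}(Y_1)$; for $t\geq1$, $Y_{t+1}=AX_t-\beta X_{t-1}R_t^{-1}+\Xi_t$, $(X_{t+1},R_{t+1})=\mathrm{QR}(Y_{t+1})$. $E_t:=\Lambda_k^{-1}(U_k^\top\Xi_t)(U_k^\top X_t)^{-1}$; $G_0:=(I_k/2+E_0)^{-1}$, $G_{t+1}:=(I_k-\beta\Lambda_k^{-1}G_t\Lambda_k^{-1}+E_{t+1})^{-1}$. *)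

theory Defs
  imports "HOL-Analysis.Analysis"
begin

text \<open>Matrices are HOL-Analysis matrices: a d x k matrix has type real^'k^'d,
  entry (i,j) is M $ i $ j. Column index type 'k is ordered via a bijection
  idx : 'k -> {0..<k}.\<close>

definition sigma_min :: "real^'k^'k \<Rightarrow> real" where
  "sigma_min M = Inf ((\<lambda>x. norm (M *v x)) ` {x. norm x = 1})"

definition theta_k :: "real^'k^'d \<Rightarrow> real^'k^'d \<Rightarrow> real" where
  "theta_k U X = arccos (sigma_min (transpose U ** X))"

definition opnorm2 :: "real^'n^'m \<Rightarrow> real" where
  "opnorm2 M = onorm (\<lambda>x. M *v x)"

definition stiefel :: "real^'k^'d \<Rightarrow> bool" where
  "stiefel X \<longleftrightarrow> transpose X ** X = mat 1"

definition upper_tri_nonneg :: "('k \<Rightarrow> nat) \<Rightarrow> real^'k^'k \<Rightarrow> bool" where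
  "upper_tri_nonneg idx R \<longleftrightarrow>
     (\<forall>i j. idx j < idx i \<longrightarrow> R $ i $ j = 0) \<and> (\<forall>i. 0 \<le> R $ i $ i)"

definition is_QR :: "('k \<Rightarrow> nat) \<Rightarrow> real^'k^'d \<Rightarrow> real^'k^'d \<Rightarrow> real^'k^'k \<Rightarrow> bool" where
  "is_QR idx Y X R \<longleftrightarrow> Y = X ** R \<and> stiefel X \<and> upper_tri_nonneg idx R"

text \<open>U_k = [u_1,...,u_k] (eigenvectors indexed from 0) and Lambda_k.\<close>
definition Uk :: "(nat \<Rightarrow> real^'d) \<Rightarrow> ('k \<Rightarrow> nat) \<Rightarrow> real^'k^'d" where
  "Uk u idx = (\<chi> r c. u (idx c) $ r)"

definition Lamk :: "(nat \<Rightarrow> real) \<Rightarrow> ('k \<Rightarrow> nat) \<Rightarrow> real^'k^'k" where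
  "Lamk lam idx = (\<chi> i j. if i = j then lam (idx i) else 0)"

definition anpm_E :: "real^'k^'k \<Rightarrow> real^'k^'d \<Rightarrow> (nat \<Rightarrow> real^'k^'d) \<Rightarrow> (nat \<Rightarrow> real^'k^'d)
    \<Rightarrow> nat \<Rightarrow> real^'k^'k" where
  "anpm_E Lam U Xi X t = matrix_inv Lam ** (transpose U ** Xi t) ** matrix_inv (transpose U ** X t)"

primrec Gpre :: "real \<Rightarrow> real^'k^'k \<Rightarrow> (nat \<Rightarrow> real^'k^'k) \<Rightarrow> nat \<Rightarrow> real^'k^'k" where
  "Gpre beta Lam E 0 = (1/2) *\<^sub>R mat 1 + E 0"
| "Gpre beta Lam E (Suc t) =
     mat 1 - beta *\<^sub>R (matrix_inv Lam ** matrix_inv (Gpre beta Lam E t) ** matrix_inv Lam) + E (Suc t)"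

definition Gmat :: "real \<Rightarrow> real^'k^'k \<Rightarrow> (nat \<Rightarrow> real^'k^'k) \<Rightarrow> nat \<Rightarrow> real^'k^'k" where
  "Gmat beta Lam E t = matrix_inv (Gpre beta Lam E t)"

end

theory Submission
  imports Defs
begin

(* Since U^T A = Lambda U^T, projecting the ANPM recursion onto the top-k eigenspace gives
   U^T Y(t+1) = Lambda G(t)^-1 U^T X(t), where G(t)^-1 = I - beta Lambda^-1 G(t-1) Lambda^-1 + E(t)
   (and G(0)^-1 = I - I/2 + E(0)).  The perturbation hypothesis together with
   ||(U^T X(t))^-1|| <= 1 / cos theta_k(U, X(t)) gives ||E(t)|| <= c Delta, and if
   ||G(t-1)|| <= 1/(1/2 - c Delta) then the momentum term has norm at most
   beta ||G(t-1)|| / lambda_k^2 <= 1/2, because 4 beta < lambda_k^2 and c = 1/32.  So G(t)^-1 is a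
   perturbation of the identity of norm at most 1/2 + c Delta < 1, hence invertible with
   ||G(t)|| <= 1/(1/2 - c Delta), which closes the induction.  Invertibility of
   U^T Y(t+1) = (U^T X(t+1)) R(t+1) passes on to U^T X(t+1) and R(t+1). *)

section \<open>Inverses of square matrices\<close>

lemma matrix_inv_right:
  fixes A :: "'a::field^'n^'n"
  assumes "invertible A"
  shows "A ** matrix_inv A = mat 1"
  using assms someI_ex[of "\<lambda>A'. A ** A' = mat 1 \<and> A' ** A = mat 1"]
  unfolding invertible_def matrix_inv_def by blast

lemma matrix_inv_left:
  fixes A :: "'a::field^'n^'n"
  assumes "invertible A"
  shows "matrix_inv A ** A = mat 1"
  using assms someI_ex[of "\<lambda>A'. A ** A' = mat 1 \<and> A' ** A = mat 1"]
  unfolding invertible_def matrix_inv_def by blast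

lemma matrix_inv_unique:
  fixes A B :: "'a::field^'n^'n"
  assumes "B ** A = mat 1"
  shows "matrix_inv A = B"
proof -
  have "invertible A"
    using assms invertible_left_inverse by blast
  then have "B = B ** (A ** matrix_inv A)"
    by (simp add: matrix_inv_right)
  then show ?thesis
    by (simp add: matrix_mul_assoc assms)
qed

lemma matrix_inv_mult:
  fixes A B :: "'a::field^'n^'n"
  assumes "invertible A" "invertible B"
  shows "matrix_inv (A ** B) = matrix_inv B ** matrix_inv A"
proof (rule matrix_inv_unique)
  have "matrix_inv B ** matrix_inv A ** (A ** B) = matrix_inv B ** (matrix_inv A ** A) ** B"
    by (simp add: matrix_mul_assoc)
  then show "matrix_inv B ** matrix_inv A ** (A ** B) = mat 1"
    by (simp add: matrix_inv_left assms)
qed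

lemma matrix_inv_matrix_inv:
  fixes A :: "'a::field^'n^'n"
  assumes "invertible A"
  shows "matrix_inv (matrix_inv A) = A"
  by (rule matrix_inv_unique) (rule matrix_inv_right[OF assms])

lemma matrix_mul_inv_cancel_right:
  fixes A :: "'a::field^'n^'n"
  assumes "invertible A"
  shows "B ** A ** matrix_inv A = B" "B ** matrix_inv A ** A = B"
  by (simp_all add: matrix_inv_left matrix_inv_right assms flip: matrix_mul_assoc)

lemmas matrix_inv_simps = matrix_inv_left matrix_inv_right matrix_mul_inv_cancel_right

lemma invertible_mult_factors:
  fixes A B :: "real^'n^'n"
  assumes "invertible (A ** B)"
  shows "invertible A" "invertible B"
  using assms by (auto simp: invertible_det_nz det_mul)

lemma rank_eq_card_if_invertible_mult:
  fixes A :: "real^'m^'n" and B :: "real^'n^'m"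
  assumes "invertible (A ** B)"
  shows "rank B = CARD('n)"
proof -
  have "rank (A ** B) = CARD('n)"
    using assms full_rank_injective inj_matrix_vector_mult by blast
  then show ?thesis
    using rank_mul_le_right[of A B] rank_bound[of B] by linarith
qed

lemma matrix_add_rdistrib: "((A::'a::semiring_1^'n^'m) + B) ** C = A ** C + B ** C"
  by (simp add: matrix_matrix_mult_def vec_eq_iff sum.distrib algebra_simps)

lemma matrix_diff_ldistrib: "(A::'a::ring_1^'n^'m) ** (B - C) = A ** B - A ** C"
  by (simp add: matrix_matrix_mult_def vec_eq_iff sum_subtractf algebra_simps)

lemma matrix_diff_rdistrib: "((A::'a::ring_1^'n^'m) - B) ** C = A ** C - B ** C"
  by (simp add: matrix_matrix_mult_def vec_eq_iff sum_subtractf algebra_simps)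

lemma matrix_mul_scaleR_right: "(A::real^'n^'m) ** (r *\<^sub>R B) = r *\<^sub>R (A ** B)"
  by (simp add: matrix_scalar_ac scalar_matrix_assoc)

lemmas matrix_mul_scaleR_left = scalar_matrix_assoc[symmetric]

section \<open>Operator norm\<close>

lemma opnorm2_mult_vec: "norm (M *v x) \<le> opnorm2 (M::real^'n^'m) * norm x"
  unfolding opnorm2_def by (rule onorm) simp

lemma opnorm2_nonneg: "0 \<le> opnorm2 (M::real^'n^'m)"
  unfolding opnorm2_def by (rule onorm_pos_le) simp

lemma opnorm2_le:
  assumes "0 \<le> b" "\<And>x. norm (M *v x) \<le> b * norm x"
  shows "opnorm2 (M::real^'n^'m) \<le> b"
  unfolding opnorm2_def by (rule onorm_bound) (use assms in auto)

lemma opnorm2_mult: "opnorm2 ((A::real^'n^'m) ** (B::real^'p^'n)) \<le> opnorm2 A * opnorm2 B"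
  using onorm_compose[of "(*v) A" "(*v) B"]
  by (simp add: opnorm2_def o_def matrix_vector_mul_assoc)

lemma opnorm2_mult3:
  "opnorm2 ((A::real^'n^'m) ** (B::real^'p^'n) ** (C::real^'q^'p))
    \<le> opnorm2 A * opnorm2 B * opnorm2 C"
  by (meson opnorm2_mult opnorm2_nonneg order_trans mult_right_mono)

lemma opnorm2_scaleR: "opnorm2 (r *\<^sub>R (M::real^'n^'m)) = \<bar>r\<bar> * opnorm2 M"
  using onorm_scaleR[of "(*v) M" r]
  by (simp add: opnorm2_def scaleR_matrix_vector_assoc)

lemma opnorm2_scaleR_mat1: "opnorm2 (r *\<^sub>R (mat 1 :: real^'n^'n)) \<le> \<bar>r\<bar>"
  by (rule opnorm2_le) (simp_all flip: scaleR_matrix_vector_assoc)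

lemma invertible_if_bounded_below:
  fixes M :: "real^'n^'n"
  assumes a: "0 < a" and below: "\<And>x. a * norm x \<le> norm (M *v x)"
  shows "invertible M" "opnorm2 (matrix_inv M) \<le> 1 / a"
proof -
  have "inj ((*v) M)"
  proof (rule linear_injective_0[THEN iffD2])
    show "\<forall>x. M *v x = 0 \<longrightarrow> x = 0"
    proof (intro allI impI)
      fix x assume "M *v x = 0"
      then have "a * norm x \<le> 0"
        using below[of x] by simp
      then show "x = 0"
        using a by (simp add: mult_le_0_iff)
    qed
  qed simp
  then show inv: "invertible M"
    using matrix_left_invertible_injective invertible_left_inverse by blast
  show "opnorm2 (matrix_inv M) \<le> 1 / a"
  proof (rule opnorm2_le)
    fix y
    have "a * norm (matrix_inv M *v y) \<le> norm y"
      using below[of "matrix_inv M *v y"] by (simp add: matrix_vector_mul_assoc matrix_inv_right inv)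
    then show "norm (matrix_inv M *v y) \<le> 1 / a * norm y"
      using a by (simp add: field_simps mult.commute)
  qed (use a in simp)
qed

lemma invertible_identity_perturbation:
  fixes P E :: "real^'n^'n"
  assumes P: "opnorm2 P \<le> p" and E: "opnorm2 E \<le> e" and small: "p + e < 1"
  shows "invertible (mat 1 - P + E)" "opnorm2 (matrix_inv (mat 1 - P + E)) \<le> 1 / (1 - p - e)"
proof -
  have pos: "0 < 1 - p - e"
    using small by simp
  have below: "(1 - p - e) * norm x \<le> norm ((mat 1 - P + E) *v x)" for x
  proof -
    have "norm (P *v x) \<le> p * norm x" "norm (E *v x) \<le> e * norm x"
      using P E opnorm2_mult_vec norm_ge_zero mult_right_mono order_trans by metis+
    moreover have "norm x \<le> norm (x - P *v x + E *v x) + norm (P *v x) + norm (E *v x)"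
      using norm_triangle_ineq4[of "x - P *v x + E *v x" "E *v x"]
        norm_triangle_ineq[of "x - P *v x" "P *v x"] by simp
    ultimately show ?thesis
      by (simp add: algebra_simps)
  qed
  show "invertible (mat 1 - P + E)" "opnorm2 (matrix_inv (mat 1 - P + E)) \<le> 1 / (1 - p - e)"
    using invertible_if_bounded_below[OF pos below] by simp_all
qed

section \<open>Smallest singular value and principal angles\<close>

lemma sigma_min_nonneg: "0 \<le> sigma_min (M::real^'n^'n)"
proof -
  have "(\<lambda>x. norm (M *v x)) ` {x. norm x = 1} \<noteq> {}"
    using norm_axis_1 by blast
  then show ?thesis
    unfolding sigma_min_def by (rule cInf_greatest) auto
qed

lemma sigma_min_le_norm: "sigma_min (M::real^'n^'n) * norm x \<le> norm (M *v x)"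
proof (cases "x = 0")
  case False
  then have nx: "norm x > 0" by simp
  have "sigma_min M \<le> norm (M *v ((1 / norm x) *\<^sub>R x))"
    unfolding sigma_min_def by (rule cInf_lower) (use nx in \<open>auto intro: bdd_belowI[of _ 0]\<close>)
  also have "\<dots> = norm (M *v x) / norm x"
    by (simp add: matrix_vector_mult_scaleR)
  finally show ?thesis
    using nx by (simp add: field_simps)
qed simp

lemma invertible_if_sigma_min_pos: "0 < sigma_min (M::real^'n^'n) \<Longrightarrow> invertible M"
  using invertible_if_bounded_below(1) sigma_min_le_norm by blast

lemma sigma_min_mult_opnorm2_inv_le:
  fixes M :: "real^'n^'n"
  assumes "invertible M"
  shows "sigma_min M * opnorm2 (matrix_inv M) \<le> 1"
proof (cases "sigma_min M = 0")
  case False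
  then have pos: "0 < sigma_min M"
    using sigma_min_nonneg[of M] by simp
  have "opnorm2 (matrix_inv M) \<le> 1 / sigma_min M"
    by (rule invertible_if_bounded_below(2)[OF pos sigma_min_le_norm])
  then show ?thesis
    using pos by (simp add: field_simps mult.commute)
qed simp

lemma norm_mult_vec_orthonormal:
  fixes U :: "real^'k^'d"
  assumes "transpose U ** U = mat 1"
  shows "norm (U *v z) = norm z"
proof -
  have "(U *v z) \<bullet> (U *v z) = z \<bullet> ((U *v z) v* U)"
    by (metis dot_lmul_matrix inner_commute)
  also have "(U *v z) v* U = z"
    using matrix_vector_mul_assoc[of "transpose U" U z] assms by simp
  finally show ?thesis
    by (simp add: norm_eq_sqrt_inner)
qed

lemma norm_transpose_orthonormal_le:
  fixes U :: "real^'k^'d"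
  assumes "transpose U ** U = mat 1"
  shows "norm (transpose U *v v) \<le> norm v"
proof -
  define z where "z = transpose U *v v"
  have "norm z ^ 2 = v \<bullet> (U *v z)"
    unfolding z_def power2_norm_eq_inner transpose_matrix_vector by (rule dot_lmul_matrix)
  also have "\<dots> \<le> norm v * norm z"
    using norm_cauchy_schwarz norm_mult_vec_orthonormal[OF assms] by metis
  finally have "norm z * norm z \<le> norm v * norm z"
    by (simp add: power2_eq_square)
  then show ?thesis
    unfolding z_def[symmetric] by (cases "norm z = 0") (auto simp: mult_le_cancel_right)
qed

lemma sigma_min_orthonormal_le_1:
  fixes U X :: "real^'k^'d"
  assumes "transpose U ** U = mat 1" "stiefel X"
  shows "sigma_min (transpose U ** X) \<le> 1"
proof -
  fix i :: 'k
  have "sigma_min (transpose U ** X) * norm (axis i (1::real))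
      \<le> norm (transpose U *v (X *v axis i 1))"
    using sigma_min_le_norm by (metis matrix_vector_mul_assoc)
  also have "\<dots> \<le> norm (X *v axis i 1)"
    by (rule norm_transpose_orthonormal_le[OF assms(1)])
  also have "\<dots> = 1"
    using norm_mult_vec_orthonormal[of X "axis i 1"] assms(2) unfolding stiefel_def by simp
  finally show ?thesis by simp
qed

lemma cos_theta_k:
  fixes U X :: "real^'k^'d"
  assumes "transpose U ** U = mat 1" "stiefel X"
  shows "cos (theta_k U X) = sigma_min (transpose U ** X)"
  unfolding theta_k_def
  using sigma_min_nonneg[of "transpose U ** X"] sigma_min_orthonormal_le_1[OF assms]
  by (simp add: cos_arccos)

section \<open>The top eigenspace\<close>

lemma Uk_orthonormal:
  fixes u :: "nat \<Rightarrow> real^'d" and idx :: "'k::finite \<Rightarrow> nat"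
  assumes "inj idx" "\<And>c. idx c < CARD('d)"
    and "\<forall>i<CARD('d). \<forall>j<CARD('d). u i \<bullet> u j = (if i = j then 1 else 0)"
  shows "transpose (Uk u idx) ** Uk u idx = mat 1"
proof -
  have "(transpose (Uk u idx) ** Uk u idx) $ i $ j = u (idx i) \<bullet> u (idx j)" for i j
    by (simp add: matrix_matrix_mult_def transpose_def Uk_def inner_vec_def)
  then show ?thesis
    using assms by (simp add: vec_eq_iff mat_def inj_eq)
qed

lemma Uk_transpose_eigen:
  fixes A :: "real^'d^'d" and u :: "nat \<Rightarrow> real^'d" and idx :: "'k::finite \<Rightarrow> nat"
  assumes "transpose A = A" and "\<And>c. A *v u (idx c) = lam (idx c) *\<^sub>R u (idx c)"
  shows "transpose (Uk u idx) ** A = Lamk lam idx ** transpose (Uk u idx)"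
proof -
  have "A $ s $ r = A $ r $ s" for r s
    using assms(1) by (metis transpose_def vec_lambda_beta)
  then have "(transpose (Uk u idx) ** A) $ i $ r = (\<Sum>s\<in>UNIV. A $ r $ s * u (idx i) $ s)" for i r
    by (simp add: matrix_matrix_mult_def transpose_def Uk_def mult.commute)
  then have "(transpose (Uk u idx) ** A) $ i $ r = (A *v u (idx i)) $ r" for i r
    by (simp add: matrix_vector_mult_def)
  moreover have "(Lamk lam idx ** transpose (Uk u idx)) $ i $ r = lam (idx i) * u (idx i) $ r" for i r
    by (simp add: matrix_matrix_mult_def transpose_def Uk_def Lamk_def if_distrib if_distribR
        cong: if_cong)
  ultimately show ?thesis
    using assms(2) by (simp add: vec_eq_iff)
qed

lemma Lamk_mult: "Lamk f idx ** Lamk g idx = Lamk (\<lambda>n. f n * g n) idx"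
proof -
  have "(Lamk f idx ** Lamk g idx) $ i $ j
      = (\<Sum>l\<in>UNIV. if l = i then (if i = j then f (idx i) * g (idx i) else 0) else 0)" for i j
    unfolding Lamk_def matrix_matrix_mult_def vec_lambda_beta by (intro sum.cong) auto
  then show ?thesis
    by (simp add: Lamk_def vec_eq_iff)
qed

lemma Lamk_inverse:
  assumes "\<And>i. f (idx i) \<noteq> 0"
  shows "matrix_inv (Lamk f idx) = Lamk (\<lambda>n. 1 / f n) idx" "invertible (Lamk f idx)"
proof -
  have "Lamk (\<lambda>n. 1 / f n) idx ** Lamk f idx = mat 1"
    unfolding Lamk_mult using assms by (simp add: Lamk_def mat_def vec_eq_iff)
  then show "matrix_inv (Lamk f idx) = Lamk (\<lambda>n. 1 / f n) idx" "invertible (Lamk f idx)"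
    using matrix_inv_unique invertible_left_inverse by blast+
qed

lemma opnorm2_Lamk_le:
  fixes idx :: "'k::finite \<Rightarrow> nat"
  assumes "0 \<le> b" "\<And>i. \<bar>f (idx i)\<bar> \<le> b"
  shows "opnorm2 (Lamk f idx) \<le> b"
proof (rule opnorm2_le[OF assms(1)])
  fix x :: "real^'k"
  have "(Lamk f idx *v x) $ i = (\<Sum>j\<in>UNIV. if j = i then f (idx i) * x $ i else 0)" for i
    unfolding Lamk_def matrix_vector_mult_def vec_lambda_beta by (intro sum.cong) auto
  then have "(Lamk f idx *v x) $ i = f (idx i) * x $ i" for i
    by simp
  then have "norm (Lamk f idx *v x) \<le> norm (b *\<^sub>R x)"
    using assms by (intro norm_le_componentwise_cart) (simp add: abs_mult mult_right_mono)
  then show "norm (Lamk f idx *v x) \<le> b * norm x"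
    using assms(1) by simp
qed

lemma opnorm2_inv_Lamk_le:
  fixes idx :: "'k::finite \<Rightarrow> nat"
  assumes l: "0 < l" and ge: "\<And>i. l \<le> f (idx i)"
  shows "opnorm2 (matrix_inv (Lamk f idx)) \<le> 1 / l"
proof -
  have pos: "0 < f (idx i)" for i
    using l ge[of i] by linarith
  show ?thesis
    unfolding Lamk_inverse(1)[where f = f and idx = idx, OF pos[THEN less_imp_neq, symmetric]]
  proof (rule opnorm2_Lamk_le)
    show "\<bar>1 / f (idx i)\<bar> \<le> 1 / l" for i
      using l ge[of i] pos[of i] by (simp add: frac_le)
  qed (use l in simp)
qed

lemma top_eigenspace:
  fixes A :: "real^'d^'d" and u :: "nat \<Rightarrow> real^'d" and idx :: "'k::finite \<Rightarrow> nat"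
  assumes dk: "CARD('k) < CARD('d)" and idx: "bij_betw idx UNIV {..<CARD('k)}"
    and symm: "transpose A = A"
    and orth: "\<forall>i<CARD('d). \<forall>j<CARD('d). u i \<bullet> u j = (if i = j then 1 else 0)"
    and eig: "\<forall>i<CARD('d). A *v u i = lam i *\<^sub>R u i"
    and sorted: "\<forall>i j. i \<le> j \<longrightarrow> j < CARD('d) \<longrightarrow> lam j \<le> lam i"
    and pos: "0 < lam (CARD('k) - 1)"
  shows "transpose (Uk u idx) ** Uk u idx = mat 1"
    and "transpose (Uk u idx) ** A = Lamk lam idx ** transpose (Uk u idx)"
    and "invertible (Lamk lam idx)"
    and "opnorm2 (matrix_inv (Lamk lam idx)) \<le> 1 / lam (CARD('k) - 1)"
proof -
  have idx_lt: "idx i < CARD('k)" for i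
    using idx by (auto dest: bij_betwE)
  then have idx_d: "idx i < CARD('d)" for i
    using dk less_trans by blast
  have ge: "lam (CARD('k) - 1) \<le> lam (idx i)" for i
    using sorted idx_lt[of i] dk by auto
  show "transpose (Uk u idx) ** Uk u idx = mat 1"
    using idx_d orth bij_betw_imp_inj_on[OF idx] by (intro Uk_orthonormal)
  show "transpose (Uk u idx) ** A = Lamk lam idx ** transpose (Uk u idx)"
    using idx_d eig by (intro Uk_transpose_eigen symm) auto
  show "invertible (Lamk lam idx)"
    using ge pos by (intro Lamk_inverse(2)) (metis not_less order_less_le_trans)
  show "opnorm2 (matrix_inv (Lamk lam idx)) \<le> 1 / lam (CARD('k) - 1)"
    using pos ge by (rule opnorm2_inv_Lamk_le)
qed

section \<open>The projected recursion\<close>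

lemma momentum_margin:
  fixes l s c :: real
  assumes s: "0 < s" and l: "2 * s < l" and c: "c \<le> 1/32"
  shows "2 * s^2 \<le> (1/2 - c * ((l - 2 * s) / l)) * l^2"
proof -
  have "c * ((l - 2 * s) * l) \<le> 1/32 * ((l - 2 * s) * l)"
    using mult_right_mono[OF c, of "(l - 2 * s) * l"] s l by simp
  also have "\<dots> \<le> l^2 / 2 - 2 * s^2"
  proof -
    have "(2 * s)^2 \<le> l^2"
      using s l by (intro power_mono) auto
    moreover have "s * (2 * s) \<le> s * l"
      using s l by (intro mult_left_mono) auto
    ultimately show ?thesis
      by (simp add: algebra_simps power2_eq_square)
  qed
  finally have "2 * s^2 \<le> l^2 / 2 - c * ((l - 2 * s) * l)"
    by linarith
  also have "\<dots> = (1/2 - c * ((l - 2 * s) / l)) * l^2"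
    using s l by (simp add: power2_eq_square field_simps)
  finally show ?thesis .
qed

locale anpm =
  fixes A :: "real^'d::finite^'d" and U :: "real^'k::finite^'d" and Lam :: "real^'k^'k"
    and lmin beta e :: real
    and X Y Xi :: "nat \<Rightarrow> real^'k^'d" and R :: "nat \<Rightarrow> real^'k^'k"
  assumes U_orthonormal: "transpose U ** U = mat 1"
    and U_eigen: "transpose U ** A = Lam ** transpose U"
    and Lam_invertible: "invertible Lam"
    and norm_inv_Lam: "opnorm2 (matrix_inv Lam) \<le> 1 / lmin"
    and lmin_pos: "0 < lmin"
    and beta_pos: "0 < beta"
    and momentum_small: "2 * beta \<le> (1/2 - e) * lmin^2"
    and X0_stiefel: "stiefel (X 0)"
    and X0_angle: "0 < cos (theta_k U (X 0))"
    and Y_first: "Y 1 = (1/2) *\<^sub>R (A ** X 0) + Xi 0"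
    and Y_step: "\<And>t. Y (Suc (Suc t))
                   = A ** X (Suc t) - beta *\<^sub>R (X t ** matrix_inv (R (Suc t))) + Xi (Suc t)"
    and Y_QR: "\<And>t. Y (Suc t) = X (Suc t) ** R (Suc t)"
    and X_stiefel: "\<And>t. stiefel (X (Suc t))"
    and perturbation: "\<And>t. opnorm2 (transpose U ** Xi t) \<le> e * lmin * cos (theta_k U (X t))"
begin

abbreviation E :: "nat \<Rightarrow> real^'k^'k" where
  "E \<equiv> anpm_E Lam U Xi X"

abbreviation Ginv :: "nat \<Rightarrow> real^'k^'k" where
  "Ginv \<equiv> Gpre beta Lam E"

definition M :: "nat \<Rightarrow> real^'k^'k" where
  "M t = transpose U ** X t"

lemma E_eq: "E t = matrix_inv Lam ** (transpose U ** Xi t) ** matrix_inv (M t)"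
  unfolding anpm_E_def M_def ..

lemma cos_theta_k_X: "cos (theta_k U (X t)) = sigma_min (M t)"
  unfolding M_def using X0_stiefel X_stiefel by (cases t) (simp_all add: cos_theta_k U_orthonormal)

lemma e_nonneg: "0 \<le> e"
proof -
  have "0 \<le> e * lmin * cos (theta_k U (X 0))"
    using perturbation[of 0] opnorm2_nonneg order_trans by blast
  then show ?thesis
    using X0_angle lmin_pos by (simp add: zero_le_mult_iff)
qed

lemma e_less_half: "e < 1/2"
  using momentum_small beta_pos lmin_pos by (smt (verit) mult_nonpos_nonneg zero_le_power2)

lemma invertible_M0: "invertible (M 0)"
  using X0_angle by (simp add: cos_theta_k_X invertible_if_sigma_min_pos)

lemma opnorm2_E_le:
  assumes "invertible (M t)"
  shows "opnorm2 (E t) \<le> e"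
proof -
  have "opnorm2 (E t)
      \<le> opnorm2 (matrix_inv Lam) * opnorm2 (transpose U ** Xi t) * opnorm2 (matrix_inv (M t))"
    unfolding E_eq by (rule opnorm2_mult3)
  also have "\<dots> \<le> 1 / lmin * (e * lmin * sigma_min (M t)) * opnorm2 (matrix_inv (M t))"
    using perturbation[of t] norm_inv_Lam lmin_pos e_nonneg sigma_min_nonneg[of "M t"]
    by (intro mult_mono opnorm2_nonneg) (auto simp: cos_theta_k_X)
  also have "\<dots> = e * (sigma_min (M t) * opnorm2 (matrix_inv (M t)))"
    using lmin_pos by simp
  also have "\<dots> \<le> e"
    using sigma_min_mult_opnorm2_inv_le[OF assms] e_nonneg by (simp add: mult_left_le)
  finally show ?thesis .
qed

lemma Lam_E_M:
  assumes "invertible (M t)"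
  shows "Lam ** E t ** M t = transpose U ** Xi t"
  unfolding E_eq by (simp add: matrix_mul_assoc matrix_inv_simps Lam_invertible assms)

lemma UY_first: "transpose U ** Y 1 = (1/2) *\<^sub>R (Lam ** M 0) + transpose U ** Xi 0"
  unfolding Y_first M_def
  by (simp add: matrix_add_ldistrib matrix_mul_scaleR_right matrix_mul_assoc U_eigen)

lemma UY_step:
  "transpose U ** Y (Suc (Suc t))
     = Lam ** M (Suc t) - beta *\<^sub>R (M t ** matrix_inv (R (Suc t))) + transpose U ** Xi (Suc t)"
  unfolding Y_step M_def
  by (simp add: matrix_add_ldistrib matrix_diff_ldistrib matrix_mul_scaleR_right matrix_mul_assoc
      U_eigen)

lemma opnorm2_momentum_le:
  assumes "opnorm2 (matrix_inv (Ginv t)) \<le> 1 / (1/2 - e)"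
  shows "opnorm2 (beta *\<^sub>R (matrix_inv Lam ** matrix_inv (Ginv t) ** matrix_inv Lam)) \<le> 1/2"
proof -
  have "opnorm2 (beta *\<^sub>R (matrix_inv Lam ** matrix_inv (Ginv t) ** matrix_inv Lam))
      \<le> beta * (1 / lmin * (1 / (1/2 - e)) * (1 / lmin))"
    unfolding opnorm2_scaleR using beta_pos lmin_pos e_less_half norm_inv_Lam assms
    by (intro mult_left_mono order_trans[OF opnorm2_mult3] mult_mono opnorm2_nonneg) auto
  also have "\<dots> \<le> 1/2"
    using momentum_small e_less_half lmin_pos by (simp add: field_simps power2_eq_square)
  finally show ?thesis .
qed

lemma Ginv_0: "Ginv 0 = mat 1 - (1/2) *\<^sub>R mat 1 + E 0"
  by (simp add: vec_eq_iff mat_def)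

lemma Ginv_Suc:
  "Ginv (Suc t)
     = mat 1 - beta *\<^sub>R (matrix_inv Lam ** matrix_inv (Ginv t) ** matrix_inv Lam) + E (Suc t)"
  by simp

lemma QR_Suc:
  assumes "invertible (M t)" "invertible (Ginv t)" "transpose U ** Y (Suc t) = Lam ** Ginv t ** M t"
  shows "M (Suc t) ** R (Suc t) = Lam ** Ginv t ** M t"
    and "invertible (M (Suc t))" "invertible (R (Suc t))"
proof -
  show QR: "M (Suc t) ** R (Suc t) = Lam ** Ginv t ** M t"
    using assms(3) Y_QR[of t] by (simp add: M_def matrix_mul_assoc)
  have "invertible (M (Suc t) ** R (Suc t))"
    unfolding QR using assms Lam_invertible by (simp add: invertible_mult)
  then show "invertible (M (Suc t))" "invertible (R (Suc t))"
    by (rule invertible_mult_factors)+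
qed

lemma UY_Suc_Suc:
  assumes Ginv: "invertible (Ginv t)" and M: "invertible (M (Suc t))" and R: "invertible (R (Suc t))"
    and QR: "M (Suc t) ** R (Suc t) = Lam ** Ginv t ** M t"
  shows "transpose U ** Y (Suc (Suc t)) = Lam ** Ginv (Suc t) ** M (Suc t)"
proof -
  have "matrix_inv (Ginv t) ** matrix_inv Lam ** M (Suc t) ** R (Suc t) = M t"
    unfolding matrix_mul_assoc[symmetric, of _ "M (Suc t)"] QR
    by (simp add: matrix_mul_assoc matrix_inv_simps Lam_invertible Ginv)
  then have momentum:
    "matrix_inv (Ginv t) ** matrix_inv Lam ** M (Suc t) = M t ** matrix_inv (R (Suc t))"
    by (metis matrix_mul_inv_cancel_right(1) R)
  have "Lam ** Ginv (Suc t) ** M (Suc t)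
      = Lam ** M (Suc t) - beta *\<^sub>R (matrix_inv (Ginv t) ** matrix_inv Lam ** M (Suc t))
        + Lam ** E (Suc t) ** M (Suc t)"
    unfolding Ginv_Suc
    by (simp add: matrix_add_ldistrib matrix_diff_ldistrib matrix_add_rdistrib matrix_diff_rdistrib
        matrix_mul_scaleR_left matrix_mul_scaleR_right matrix_mul_assoc matrix_inv_simps Lam_invertible)
  then show ?thesis
    unfolding momentum Lam_E_M[OF M] UY_step by (rule sym)
qed

lemma invariant:
  "invertible (M t) \<and> invertible (Ginv t) \<and> opnorm2 (matrix_inv (Ginv t)) \<le> 1 / (1/2 - e)
     \<and> transpose U ** Y (Suc t) = Lam ** Ginv t ** M t"
proof (induction t)
  case 0
  have "opnorm2 ((1/2) *\<^sub>R (mat 1 :: real^'k^'k)) \<le> 1/2"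
    using opnorm2_scaleR_mat1[of "1/2"] by simp
  from invertible_identity_perturbation[OF this opnorm2_E_le[OF invertible_M0]] e_less_half
  have "invertible (Ginv 0)" "opnorm2 (matrix_inv (Ginv 0)) \<le> 1 / (1/2 - e)"
    unfolding Ginv_0 by simp_all
  moreover have "transpose U ** Y 1 = Lam ** Ginv 0 ** M 0"
    by (simp add: UY_first[unfolded One_nat_def] matrix_add_ldistrib matrix_add_rdistrib
        matrix_mul_scaleR_left matrix_mul_scaleR_right Lam_E_M[OF invertible_M0])
  ultimately show ?case
    using invertible_M0 by simp
next
  case (Suc t)
  then have Ginv: "invertible (Ginv t)" and bound: "opnorm2 (matrix_inv (Ginv t)) \<le> 1 / (1/2 - e)"
    by simp_all
  note QR = QR_Suc[of t]
  from invertible_identity_perturbation[OF opnorm2_momentum_le[OF bound] opnorm2_E_le[OF QR(2)]]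
    e_less_half
  have "invertible (Ginv (Suc t))" "opnorm2 (matrix_inv (Ginv (Suc t))) \<le> 1 / (1/2 - e)"
    using Suc unfolding Ginv_Suc by simp_all
  then show ?case
    using Suc QR UY_Suc_Suc[OF Ginv QR(2,3,1)] by simp
qed

lemma Ginv_eq:
  "Ginv t = mat 1 - beta *\<^sub>R (matrix_inv Lam
      ** (transpose U ** (if t = 0 then (1 / (2 * beta)) *\<^sub>R (A ** X 0) else X (t - 1)))
      ** matrix_inv (transpose U ** X t ** (if t = 0 then mat 1 else R t))) + E t"
proof (cases t)
  case 0
  have "transpose U ** ((1 / (2 * beta)) *\<^sub>R (A ** X 0)) = (1 / (2 * beta)) *\<^sub>R (Lam ** M 0)"
    unfolding M_def by (simp add: matrix_mul_scaleR_right matrix_mul_assoc U_eigen)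
  then have "beta *\<^sub>R (matrix_inv Lam ** (transpose U ** ((1 / (2 * beta)) *\<^sub>R (A ** X 0)))
      ** matrix_inv (M 0 ** mat 1)) = (1/2) *\<^sub>R mat 1"
    using beta_pos
    by (simp add: matrix_mul_scaleR_left matrix_mul_scaleR_right matrix_mul_assoc matrix_inv_simps
        Lam_invertible invertible_M0)
  then show ?thesis
    using 0 unfolding M_def by (simp add: Ginv_0)
next
  case (Suc s)
  have M: "invertible (M s)" and Ginv: "invertible (Ginv s)"
    and QR: "M (Suc s) ** R (Suc s) = Lam ** Ginv s ** M s"
    using invariant[of s] QR_Suc[of s] by auto
  have "matrix_inv Lam ** M s ** matrix_inv (M (Suc s) ** R (Suc s))
      = matrix_inv Lam ** matrix_inv (Ginv s) ** matrix_inv Lam"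
    unfolding QR
    by (simp add: matrix_inv_mult invertible_mult Lam_invertible Ginv M matrix_mul_assoc
        matrix_inv_simps)
  then show ?thesis
    using Suc unfolding M_def by (simp add: Ginv_Suc)
qed

lemma rank_UY: "rank (transpose U ** Y (Suc t)) = CARD('k)"
  and rank_Y: "rank (Y (Suc t)) = CARD('k)"
proof -
  have "invertible (transpose U ** Y (Suc t))"
    using invariant[of t] Lam_invertible by (simp add: invertible_mult)
  then show "rank (transpose U ** Y (Suc t)) = CARD('k)" "rank (Y (Suc t)) = CARD('k)"
    using rank_eq_card_if_invertible_mult[of "mat 1"] rank_eq_card_if_invertible_mult by auto
qed

end

theorem proposition6:
  fixes A :: "real^'d::finite^'d"
    and u :: "nat \<Rightarrow> real^'d" and lam :: "nat \<Rightarrow> real"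
    and idx :: "'k::finite \<Rightarrow> nat"
    and beta c :: real
    and X Y Xi :: "nat \<Rightarrow> real^'k^'d" and R :: "nat \<Rightarrow> real^'k^'k"
  assumes dk: "CARD('k) < CARD('d)"
    and idx: "bij_betw idx UNIV {..<CARD('k)}"
    and symm: "transpose A = A"
    and psd: "\<forall>x. 0 \<le> x \<bullet> (A *v x)"
    and eig_orth: "\<forall>i<CARD('d). \<forall>j<CARD('d). u i \<bullet> u j = (if i = j then 1 else 0)"
    and eig: "\<forall>i<CARD('d). A *v u i = lam i *\<^sub>R u i"
    and eig_sorted: "\<forall>i j. i \<le> j \<longrightarrow> j < CARD('d) \<longrightarrow> lam j \<le> lam i"
    and eig_nonneg: "\<forall>i<CARD('d). 0 \<le> lam i"
    and gap: "lam (CARD('k) - 1) > lam (CARD('k))"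
    and beta_pos: "beta > 0"
    and beta_up: "lam (CARD('k) - 1) > 2 * sqrt beta"
    and beta_lo: "2 * sqrt beta \<ge> lam (CARD('k))"
    and X0: "stiefel (X 0)"
    and X0_angle: "cos (theta_k (Uk u idx) (X 0)) > 0"
    and Y1: "Y 1 = (1/2) *\<^sub>R (A ** X 0) + Xi 0"
    and Ystep: "\<forall>t\<ge>1. Y (t + 1) = A ** X t - beta *\<^sub>R (X (t - 1) ** matrix_inv (R t)) + Xi t"
    and QR: "\<forall>t\<ge>1. is_QR idx (Y t) (X t) (R t)"
    and c_def: "c = 1/32"
    and pert: "\<forall>t. opnorm2 (transpose (Uk u idx) ** Xi t)
                 \<le> c * (lam (CARD('k) - 1) - 2 * sqrt beta) * cos (theta_k (Uk u idx) (X t))"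
  shows "\<forall>t.
    (let U = Uk u idx; Lam = Lamk lam idx; E = anpm_E Lam U Xi X;
         G = Gmat beta Lam E;
         lamk = lam (CARD('k) - 1);
         Delta = (lamk - 2 * sqrt beta) / lamk;
         Xprev = (if t = 0 then (1 / (2 * beta)) *\<^sub>R (A ** X 0) else X (t - 1));
         Rt = (if t = 0 then mat 1 else R t)
     in invertible (transpose U ** X t)
      \<and> invertible (Gpre beta Lam E t)
      \<and> rank (transpose U ** Y (t + 1)) = CARD('k)
      \<and> rank (Y (t + 1)) = CARD('k)
      \<and> opnorm2 (G t) \<le> 1 / (1/2 - c * Delta)
      \<and> G t = matrix_inv (mat 1 - beta *\<^sub>R (matrix_inv Lam ** (transpose U ** Xprev)
                 ** matrix_inv (transpose U ** X t ** Rt)) + E t)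
      \<and> transpose U ** Y (t + 1) = Lam ** matrix_inv (G t) ** (transpose U ** X t))"
proof -
  let ?U = "Uk u idx" and ?Lam = "Lamk lam idx" and ?l = "lam (CARD('k) - 1)"
  have l_pos: "0 < ?l"
    using beta_up beta_pos by (smt (verit) real_sqrt_gt_zero)
  note spectral = top_eigenspace[OF dk idx symm eig_orth eig eig_sorted l_pos]
  interpret anpm A ?U ?Lam ?l beta "c * ((?l - 2 * sqrt beta) / ?l)" X Y Xi R
  proof
    show "2 * beta \<le> (1/2 - c * ((?l - 2 * sqrt beta) / ?l)) * ?l^2"
      using momentum_margin[of "sqrt beta" ?l c] beta_pos beta_up c_def[THEN eq_refl] by simp
    show "Y (Suc (Suc t)) = A ** X (Suc t) - beta *\<^sub>R (X t ** matrix_inv (R (Suc t))) + Xi (Suc t)"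
      for t using Ystep[rule_format, of "Suc t"] by simp
    show "Y (Suc t) = X (Suc t) ** R (Suc t)" "stiefel (X (Suc t))" for t
      using QR[rule_format, of "Suc t"] by (simp_all add: is_QR_def)
    show "opnorm2 (transpose ?U ** Xi t)
        \<le> c * ((?l - 2 * sqrt beta) / ?l) * ?l * cos (theta_k ?U (X t))" for t
      using pert l_pos by simp
  qed (use spectral l_pos beta_pos X0 X0_angle Y1 in auto)
  show ?thesis
    unfolding Let_def Gmat_def
    using invariant Ginv_eq rank_UY rank_Y by (simp add: M_def matrix_inv_matrix_inv)
qed

end
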